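(* Let $X$ be a real random variable with cumulative distribution function $F$, $\bar F=1-F$, and assume there exists $\epsilon>0$ with $\mathbb{E}[e^{(1+\epsilon)X}]<\infty$. Let $c(k)=\int_k^\infty(e^x-e^k)\,dF(x)$. If $-\log\bar F\in R_\alpha$ for some $\alpha\ge1$, then $-\log c\in R_\alpha$ and, as $k\to\infty$, $$-\log c(k)\sim -k-\log\bar F(k).$$
   Context: A measurable function $g$, positive for large $x$, is in $R_\alpha$ (regularly varying at $+\infty$ with index $\alpha$) if $\lim_{x\to\infty}g(\lambda x)/g(x)=\lambda^\alpha$ for every $\lambda>0$. $g\sim h$ means $g(k)/h(k)\to1$ as $k\to\infty$. *)

theory Defs
  imports "HOL-Probability.Probability"
begin

definition regvar :: "(real \<Rightarrow> real) \<Rightarrow> real \<Rightarrow> bool" where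
  "regvar g a \<longleftrightarrow> g \<in> borel_measurable borel \<and> (\<forall>\<^sub>F x in at_top. g x > 0) \<and>
     (\<forall>l>0. ((\<lambda>x. g (l * x) / g x) \<longlongrightarrow> l powr a) at_top)"

definition asym_eq :: "(real \<Rightarrow> real) \<Rightarrow> (real \<Rightarrow> real) \<Rightarrow> bool" where
  "asym_eq g h \<longleftrightarrow> ((\<lambda>k. g k / h k) \<longlongrightarrow> 1) at_top"

definition cdfX :: "'a measure \<Rightarrow> ('a \<Rightarrow> real) \<Rightarrow> real \<Rightarrow> real" where
  "cdfX M X x = measure M {w \<in> space M. X w \<le> x}"

definition tailX :: "'a measure \<Rightarrow> ('a \<Rightarrow> real) \<Rightarrow> real \<Rightarrow> real" where
  "tailX M X x = 1 - cdfX M X x"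

definition callX :: "'a measure \<Rightarrow> ('a \<Rightarrow> real) \<Rightarrow> real \<Rightarrow> real" where
  "callX M X k = (\<integral>w. (if X w > k then exp (X w) - exp k else 0) \<partial>M)"

end

theory Submission
  imports Defs
begin

(* Write G = - ln (tail) and H k = G k - k for its excess over the identity.
   For l > 1 the call price dominates e^k times the tail at l k, so
   - ln c(k) <= G(l k) - k; regular variation of G together with the Chernoff bound
   G(k) >= (1 + eps / 2) k turns this into (1 + o(1)) H(k). Conversely, cutting (k, oo)
   into unit cells and using the exponential moment far out bounds c(k) by the sum of
   e^(k+n+1) tail(k+n). Beyond any large k, H increases at least linearly from
   (1 - delta) H(k), so this sum is geometric and - ln c(k) >= (1 - delta) H(k) - O(1).
   Hence - ln c ~ H, and H is regularly varying with the index of G: for alpha > 1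
   because k = o(G(k)), for alpha = 1 because the linear terms cancel. *)

lemma regvar_eventually_ratio_ge:
  assumes "regvar g \<alpha>" "0 < l" "b < l powr \<alpha>"
  shows "\<forall>\<^sub>F x in at_top. b * g x \<le> g (l * x)"
proof -
  have "\<forall>\<^sub>F x in at_top. b < g (l * x) / g x"
    using assms unfolding regvar_def by (auto simp: order_tendsto_iff)
  moreover have "\<forall>\<^sub>F x in at_top. 0 < g x"
    using assms(1) unfolding regvar_def by blast
  ultimately show ?thesis
    by eventually_elim (simp add: pos_less_divide_eq less_imp_le)
qed

lemma regvar_eventually_ratio_le:
  assumes "regvar g \<alpha>" "0 < l" "l powr \<alpha> < b"
  shows "\<forall>\<^sub>F x in at_top. g (l * x) \<le> b * g x"
proof -
  have "\<forall>\<^sub>F x in at_top. g (l * x) / g x < b"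
    using assms unfolding regvar_def by (auto simp: order_tendsto_iff)
  moreover have "\<forall>\<^sub>F x in at_top. 0 < g x"
    using assms(1) unfolding regvar_def by blast
  ultimately show ?thesis
    by eventually_elim (simp add: pos_divide_less_eq less_imp_le)
qed

lemma dilation_power_lower_bound:
  fixes g :: "real \<Rightarrow> real"
  assumes "1 \<le> l" "0 \<le> \<rho>" "0 \<le> K"
    and step: "\<And>y. K \<le> y \<Longrightarrow> \<rho> * g y \<le> g (l * y)"
    and "K \<le> y"
  shows "\<rho> ^ n * g y \<le> g (l ^ n * y)"
proof (induction n)
  case 0
  then show ?case by simp
next
  case (Suc n)
  have "K \<le> l ^ n * y"
    using assms by (smt (verit) mult_le_cancel_right1 one_le_power)
  have "\<rho> ^ Suc n * g y = \<rho> * (\<rho> ^ n * g y)"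
    by simp
  also have "\<dots> \<le> \<rho> * g (l ^ n * y)"
    using Suc.IH \<open>0 \<le> \<rho>\<close> by (rule mult_left_mono)
  also have "\<dots> \<le> g (l ^ Suc n * y)"
    using step[OF \<open>K \<le> l ^ n * y\<close>] by (simp add: mult.assoc)
  finally show ?case .
qed

lemma regvar_superlinear:
  assumes g: "regvar g \<alpha>" and "1 < \<alpha>" "0 < a"
    and lin: "\<forall>\<^sub>F x in at_top. a * x \<le> g x"
  shows "filterlim (\<lambda>x. g x / x) at_top at_top"
proof -
  define \<rho> where "\<rho> = (2 powr \<alpha> + 2) / 2"
  have "2 powr 1 < (2::real) powr \<alpha>"
    using \<open>1 < \<alpha>\<close> by (intro powr_less_mono) auto
  then have \<rho>: "2 < \<rho>" "\<rho> < 2 powr \<alpha>"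
    unfolding \<rho>_def by auto
  have "\<forall>\<^sub>F y in at_top. 1 \<le> y \<and> a * y \<le> g y \<and> \<rho> * g y \<le> g (2 * y)"
    using eventually_ge_at_top lin regvar_eventually_ratio_ge[OF g _ \<rho>(2)]
    by (auto intro: eventually_conj)
  then obtain K where "1 \<le> K" and K: "\<And>y. K \<le> y \<Longrightarrow> a * y \<le> g y \<and> \<rho> * g y \<le> g (2 * y)"
    unfolding eventually_at_top_linorder by (metis order.refl order.trans)
  show ?thesis
    unfolding filterlim_at_top
  proof
    fix Z :: real
    obtain n where n: "Z / a < (\<rho> / 2) ^ n"
      using real_arch_pow[of "\<rho> / 2"] \<rho> by auto
    have "Z \<le> g x / x" if "2 ^ n * K \<le> x" for x
    proof -
      define y where "y = x / 2 ^ n"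
      have y: "K \<le> y" "x = 2 ^ n * y"
        using that unfolding y_def by (simp_all add: field_simps)
      then have "0 < x"
        using \<open>1 \<le> K\<close> by simp
      have "Z * x \<le> a * (\<rho> / 2) ^ n * x"
        using n \<open>0 < a\<close> \<open>0 < x\<close> by (intro mult_right_mono) (auto simp: field_simps)
      also have "\<dots> = \<rho> ^ n * (a * y)"
        using y(2) by (simp add: field_simps)
      also have "\<dots> \<le> \<rho> ^ n * g y"
        using K[OF y(1)] \<rho> by (intro mult_left_mono) auto
      also have "\<dots> \<le> g x"
        using dilation_power_lower_bound[of 2 \<rho> K g y n] K \<rho> \<open>1 \<le> K\<close> y by simp
      finally show ?thesis
        using \<open>0 < x\<close> by (simp add: pos_le_divide_eq)
    qed
    then show "\<forall>\<^sub>F x in at_top. Z \<le> g x / x"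
      unfolding eventually_at_top_linorder by blast
  qed
qed

lemma ident_over_excess_tendsto_zero:
  fixes g :: "real \<Rightarrow> real"
  assumes "filterlim (\<lambda>x. g x / x) at_top at_top"
  shows "((\<lambda>x. x / (g x - x)) \<longlongrightarrow> 0) at_top"
proof -
  have "filterlim (\<lambda>x. - 1 + g x / x) at_top at_top"
    using assms by (rule filterlim_tendsto_add_at_top[OF tendsto_const])
  moreover have "\<forall>\<^sub>F x in at_top. - 1 + g x / x = (g x - x) / x"
    using eventually_gt_at_top[of 0] by eventually_elim (simp add: field_simps)
  ultimately have "filterlim (\<lambda>x. (g x - x) / x) at_top at_top"
    using filterlim_cong by fastforce
  then show ?thesis
    using tendsto_inverse_0_at_top by fastforce
qed

lemma excess_ratio_tendsto:
  fixes g :: "real \<Rightarrow> real"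
  assumes lim: "((\<lambda>x. g (l * x) / g x) \<longlongrightarrow> c) at_top"
    and bounds: "\<forall>\<^sub>F x in at_top. 0 < g x \<and> 0 < g x - x \<and> \<bar>g x / (g x - x)\<bar> \<le> B"
    and linear_part: "((\<lambda>x. (c - l) * (x / (g x - x))) \<longlongrightarrow> 0) at_top"
  shows "((\<lambda>x. (g (l * x) - l * x) / (g x - x)) \<longlongrightarrow> c) at_top"
proof -
  have "((\<lambda>x. (g (l * x) / g x - c) * (g x / (g x - x))) \<longlongrightarrow> 0) at_top"
  proof (rule tendsto_0_le[where K = B])
    show "((\<lambda>x. g (l * x) / g x - c) \<longlongrightarrow> 0) at_top"
      using LIM_zero[OF lim] .
    show "\<forall>\<^sub>F x in at_top. norm ((g (l * x) / g x - c) * (g x / (g x - x)))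
        \<le> norm (g (l * x) / g x - c) * B"
      using bounds by eventually_elim (metis abs_ge_zero mult_left_mono norm_mult real_norm_def)
  qed
  with linear_part have "((\<lambda>x. c + (g (l * x) / g x - c) * (g x / (g x - x))
      + (c - l) * (x / (g x - x))) \<longlongrightarrow> c + 0 + 0) at_top"
    by (intro tendsto_add tendsto_const)
  moreover have "\<forall>\<^sub>F x in at_top. c + (g (l * x) / g x - c) * (g x / (g x - x))
      + (c - l) * (x / (g x - x)) = (g (l * x) - l * x) / (g x - x)"
    using bounds
  proof eventually_elim
    case (elim x)
    then have "g x \<noteq> 0" "g x - x \<noteq> 0"
      by auto
    then show ?case
      by (simp add: divide_simps) (simp add: algebra_simps)
  qed
  ultimately show ?thesis
    by (simp add: tendsto_cong)
qed

lemma regvar_minus_identity: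
  assumes g: "regvar g \<alpha>" and "1 \<le> \<alpha>" "1 < a"
    and lin: "\<forall>\<^sub>F x in at_top. a * x \<le> g x"
  shows "regvar (\<lambda>x. g x - x) \<alpha>"
proof -
  have bounds: "\<forall>\<^sub>F x in at_top. 0 < g x \<and> 0 < g x - x \<and> \<bar>g x / (g x - x)\<bar> \<le> a / (a - 1)"
    using lin eventually_gt_at_top[of 0]
  proof eventually_elim
    case (elim x)
    have "x < a * x"
      using \<open>1 < a\<close> elim(2) by simp
    then have pos: "0 < g x - x" "0 < g x"
      using elim by linarith+
    have "(a - 1) * g x \<le> a * (g x - x)"
      using elim(1) by (simp add: algebra_simps)
    then have "g x / (g x - x) \<le> a / (a - 1)"
      using pos \<open>1 < a\<close> by (simp add: field_simps)
    with pos show ?case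
      by simp
  qed
  have "((\<lambda>x. (g (l * x) - l * x) / (g x - x)) \<longlongrightarrow> l powr \<alpha>) at_top" if "0 < l" for l
  proof (rule excess_ratio_tendsto[OF _ bounds])
    show "((\<lambda>x. g (l * x) / g x) \<longlongrightarrow> l powr \<alpha>) at_top"
      using g \<open>0 < l\<close> unfolding regvar_def by blast
    show "((\<lambda>x. (l powr \<alpha> - l) * (x / (g x - x))) \<longlongrightarrow> 0) at_top"
    proof (cases "\<alpha> = 1")
      case True
      then show ?thesis
        using \<open>0 < l\<close> by simp
    next
      case False
      then have "filterlim (\<lambda>x. g x / x) at_top at_top"
        using regvar_superlinear[OF g _ _ lin] \<open>1 \<le> \<alpha>\<close> \<open>1 < a\<close> by simp
      then show ?thesis
        by (intro tendsto_mult_right_zero ident_over_excess_tendsto_zero)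
    qed
  qed
  moreover have "(\<lambda>x. g x - x) \<in> borel_measurable borel"
    using g unfolding regvar_def by (intro borel_measurable_diff) auto
  ultimately show ?thesis
    using bounds unfolding regvar_def by (auto elim: eventually_mono)
qed

lemma regvar_asym_eq:
  assumes h: "regvar h \<alpha>" and fh: "asym_eq f h" and "f \<in> borel_measurable borel"
  shows "regvar f \<alpha>"
proof -
  have lim: "((\<lambda>x. f x / h x) \<longlongrightarrow> 1) at_top"
    using fh unfolding asym_eq_def .
  have h_pos: "\<forall>\<^sub>F x in at_top. 0 < h x"
    using h unfolding regvar_def by blast
  have "\<forall>\<^sub>F x in at_top. 0 < f x / h x"
    using lim by (simp add: order_tendsto_iff)
  with h_pos have f_pos: "\<forall>\<^sub>F x in at_top. 0 < f x"
    by eventually_elim (simp add: zero_less_divide_iff)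
  have "((\<lambda>x. f (l * x) / f x) \<longlongrightarrow> l powr \<alpha>) at_top" if "0 < l" for l
  proof -
    have dilate: "filterlim (\<lambda>x. l * x) at_top at_top"
      using \<open>0 < l\<close> by (intro filterlim_tendsto_pos_mult_at_top[OF tendsto_const _ filterlim_ident])
    define q where "q x = (f (l * x) / h (l * x)) * (h (l * x) / h x) / (f x / h x)" for x
    have "(q \<longlongrightarrow> 1 * l powr \<alpha> / 1) at_top"
      using filterlim_compose[OF lim dilate] h \<open>0 < l\<close> lim
      unfolding regvar_def q_def by (intro tendsto_intros) auto
    then have lim_quot: "(q \<longlongrightarrow> l powr \<alpha>) at_top"
      by simp
    have "\<forall>\<^sub>F x in at_top. 0 < h (l * x)"
      using filterlim_iff[THEN iffD1, OF dilate] h_pos by blast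
    with h_pos f_pos have "\<forall>\<^sub>F x in at_top. q x = f (l * x) / f x"
      unfolding q_def by eventually_elim simp
    with lim_quot show ?thesis
      by (rule Lim_transform_eventually)
  qed
  with assms(3) f_pos show ?thesis
    unfolding regvar_def by blast
qed

lemma dilation_bound_propagates:
  fixes \<phi> \<psi> :: "real \<Rightarrow> real"
  assumes "1 < l" "0 < K"
    and near: "\<And>k x. K \<le> k \<Longrightarrow> k \<le> x \<Longrightarrow> x \<le> l * k \<Longrightarrow> \<psi> k \<le> \<phi> x"
    and step: "\<And>k. K \<le> k \<Longrightarrow> \<psi> k \<le> \<psi> (l * k)"
    and "K \<le> k" "k \<le> x"
  shows "\<psi> k \<le> \<phi> x"
proof -
  obtain n where "x / k < l ^ n"
    using real_arch_pow[OF \<open>1 < l\<close>] by blast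
  then have "x \<le> l ^ n * k"
    using \<open>0 < K\<close> \<open>K \<le> k\<close> by (simp add: field_simps)
  then show ?thesis
    using \<open>K \<le> k\<close> \<open>k \<le> x\<close>
  proof (induction n arbitrary: k)
    case 0
    then show ?case
      using near \<open>1 < l\<close> \<open>0 < K\<close> by simp
  next
    case (Suc n)
    show ?case
    proof (cases "x \<le> l * k")
      case True
      then show ?thesis using near Suc.prems by blast
    next
      case False
      have "K \<le> l * k"
        using Suc.prems \<open>1 < l\<close> \<open>0 < K\<close> by (smt (verit) mult_le_cancel_right1)
      moreover have "x \<le> l ^ n * (l * k)"
        using Suc.prems by (simp add: algebra_simps)
      ultimately have "\<psi> (l * k) \<le> \<phi> x"
        using Suc.IH False by simp
      then show ?thesis
        using step[OF \<open>K \<le> k\<close>] by linarith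
    qed
  qed
qed

lemma excess_gap_within_dilation:
  fixes G :: "real \<Rightarrow> real"
  assumes "mono G" "a * k \<le> G k" "0 \<le> k" "k \<le> x" "x \<le> l * k" "0 \<le> e" "0 \<le> \<delta>"
    and window: "(1 + e) * (l - 1) \<le> \<delta> * (a - 1)"
  shows "(1 - \<delta>) * (G k - k) - e * k \<le> G x - x - e * x"
proof -
  have "(1 + e) * (x - k) \<le> (1 + e) * ((l - 1) * k)"
    using assms by (intro mult_left_mono) (auto simp: algebra_simps)
  also have "\<dots> \<le> (\<delta> * (a - 1)) * k"
    using window \<open>0 \<le> k\<close> by (simp add: mult.assoc[symmetric] mult_right_mono)
  also have "\<dots> = \<delta> * (a * k - k)"
    by (simp add: algebra_simps)
  also have "\<dots> \<le> \<delta> * (G k - k)"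
    using assms by (intro mult_left_mono) auto
  finally have "(1 + e) * (x - k) \<le> \<delta> * (G k - k)" .
  moreover have "G k \<le> G x"
    using \<open>mono G\<close> \<open>k \<le> x\<close> by (simp add: monoD)
  ultimately show ?thesis
    by (simp add: algebra_simps)
qed

lemma excess_gap_dilation_step:
  fixes G :: "real \<Rightarrow> real"
  assumes "a * k \<le> G k" "b * G k \<le> G (l * k)" "1 \<le> b" "0 \<le> k" "\<delta> \<le> 1"
    and slope: "e * (l - 1) \<le> (1 - \<delta>) * ((b - 1) * a - (l - 1))"
  shows "(1 - \<delta>) * (G k - k) - e * k \<le> (1 - \<delta>) * (G (l * k) - l * k) - e * (l * k)"
proof -
  have "(b - 1) * (a * k) \<le> (b - 1) * G k"
    using assms by (intro mult_left_mono) auto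
  also have "\<dots> \<le> G (l * k) - G k"
    using assms by (simp add: algebra_simps)
  finally have "(b - 1) * (a * k) \<le> G (l * k) - G k" .
  have "((b - 1) * a - (l - 1)) * k = (b - 1) * (a * k) - (l - 1) * k"
    by (simp add: algebra_simps)
  also have "\<dots> \<le> G (l * k) - G k - (l - 1) * k"
    using \<open>(b - 1) * (a * k) \<le> G (l * k) - G k\<close> by linarith
  also have "\<dots> = (G (l * k) - l * k) - (G k - k)"
    by (simp add: algebra_simps)
  finally have "(1 - \<delta>) * (((b - 1) * a - (l - 1)) * k) \<le> (1 - \<delta>) * ((G (l * k) - l * k) - (G k - k))"
    using \<open>\<delta> \<le> 1\<close> by (intro mult_left_mono) auto
  moreover have "e * (l - 1) * k \<le> (1 - \<delta>) * ((b - 1) * a - (l - 1)) * k"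
    using slope \<open>0 \<le> k\<close> by (rule mult_right_mono)
  ultimately show ?thesis
    by (simp add: algebra_simps)
qed

lemma excess_gap_eventually:
  fixes G :: "real \<Rightarrow> real"
  assumes "mono G" "1 < l" "1 \<le> b" "0 \<le> e" "0 \<le> \<delta>" "\<delta> \<le> 1"
    and dilation: "\<forall>\<^sub>F x in at_top. a * x \<le> G x \<and> b * G x \<le> G (l * x)"
    and window: "(1 + e) * (l - 1) \<le> \<delta> * (a - 1)"
    and slope: "e * (l - 1) \<le> (1 - \<delta>) * ((b - 1) * a - (l - 1))"
  shows "\<forall>\<^sub>F k in at_top. \<forall>x\<ge>k. (1 - \<delta>) * (G k - k) + e * (x - k) \<le> G x - x"
proof -
  have "\<forall>\<^sub>F x in at_top. 0 < x \<and> a * x \<le> G x \<and> b * G x \<le> G (l * x)"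
    using dilation eventually_gt_at_top[of 0] by eventually_elim blast
  then obtain K where K: "\<And>x. K \<le> x \<Longrightarrow> 0 < x \<and> a * x \<le> G x \<and> b * G x \<le> G (l * x)"
    unfolding eventually_at_top_linorder by blast
  then have "0 < K"
    by blast
  have shifted: "(1 - \<delta>) * (G k - k) - e * k \<le> G x - x - e * x" if "K \<le> k" "k \<le> x" for k x
    using dilation_bound_propagates[where \<psi> = "\<lambda>k. (1 - \<delta>) * (G k - k) - e * k"
        and \<phi> = "\<lambda>x. G x - x - e * x", OF \<open>1 < l\<close> \<open>0 < K\<close> _ _ that]
      excess_gap_within_dilation[OF \<open>mono G\<close> _ _ _ _ \<open>0 \<le> e\<close> \<open>0 \<le> \<delta>\<close> window]
      excess_gap_dilation_step[OF _ _ \<open>1 \<le> b\<close> _ \<open>\<delta> \<le> 1\<close> slope] K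
    by (simp add: less_imp_le)
  have "(1 - \<delta>) * (G k - k) + e * (x - k) \<le> G x - x" if "K \<le> k" "k \<le> x" for k x
    using shifted[OF that] by (simp add: algebra_simps)
  then show ?thesis
    unfolding eventually_at_top_linorder by blast
qed

lemma excess_grows_linearly:
  fixes G :: "real \<Rightarrow> real"
  assumes "mono G" and G: "regvar G \<alpha>" and "1 \<le> \<alpha>" "1 < a"
    and lin: "\<forall>\<^sub>F x in at_top. a * x \<le> G x"
    and "0 < \<delta>" "\<delta> \<le> 1 / 2"
  shows "\<exists>e>0. \<forall>\<^sub>F k in at_top. \<forall>x\<ge>k. (1 - \<delta>) * (G k - k) + e * (x - k) \<le> G x - x"
proof -
  (* b < l \<le> l powr \<alpha> makes b an eventual lower bound for G (l x) / G x; it is chosen so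
     that (b - 1) a - (l - 1) = (l - 1) (a - 1) / 2 > 0. *)
  define l where "l = 1 + \<delta> * (a - 1) / 2"
  define b where "b = 1 + (l - 1) * (a + 1) / (2 * a)"
  define e where "e = min 1 ((a - 1) / 4)"
  have "1 < l" "1 \<le> b"
    using \<open>0 < \<delta>\<close> \<open>1 < a\<close> unfolding l_def b_def by simp_all
  have "0 < e" "e \<le> 1"
    using \<open>1 < a\<close> unfolding e_def by auto
  have "(l - 1) * (a + 1) < (l - 1) * (2 * a)"
    using \<open>1 < l\<close> \<open>1 < a\<close> by (intro mult_strict_left_mono) auto
  then have "b < l"
    using \<open>1 < a\<close> unfolding b_def by (simp add: field_simps)
  also have "l = l powr 1"
    using \<open>1 < l\<close> by simp
  also have "\<dots> \<le> l powr \<alpha>"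
    using \<open>1 < l\<close> \<open>1 \<le> \<alpha>\<close> by (intro powr_mono) auto
  finally have "\<forall>\<^sub>F x in at_top. b * G x \<le> G (l * x)"
    using regvar_eventually_ratio_ge[OF G] \<open>1 < l\<close> by simp
  with lin have dilation: "\<forall>\<^sub>F x in at_top. a * x \<le> G x \<and> b * G x \<le> G (l * x)"
    by eventually_elim blast
  have "(1 + e) * (l - 1) \<le> 2 * (l - 1)"
    using \<open>e \<le> 1\<close> \<open>1 < l\<close> by (intro mult_right_mono) auto
  then have window: "(1 + e) * (l - 1) \<le> \<delta> * (a - 1)"
    by (simp add: l_def)
  have "e \<le> (a - 1) / 4"
    unfolding e_def by (rule min.cobounded2)
  then have "e * (l - 1) \<le> (a - 1) / 4 * (l - 1)"
    using \<open>1 < l\<close> by (intro mult_right_mono) auto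
  also have "\<dots> = 1 / 2 * ((l - 1) * (a - 1) / 2)"
    by simp
  also have "\<dots> \<le> (1 - \<delta>) * ((l - 1) * (a - 1) / 2)"
    using \<open>\<delta> \<le> 1 / 2\<close> \<open>1 < l\<close> \<open>1 < a\<close> by (intro mult_right_mono) auto
  also have "(l - 1) * (a - 1) / 2 = (b - 1) * a - (l - 1)"
    using \<open>1 < a\<close> unfolding b_def by (simp add: field_simps)
  finally have slope: "e * (l - 1) \<le> (1 - \<delta>) * ((b - 1) * a - (l - 1))" .
  show ?thesis
    using excess_gap_eventually[OF \<open>mono G\<close> \<open>1 < l\<close> \<open>1 \<le> b\<close> _ _ _ dilation window slope]
      \<open>0 < e\<close> \<open>0 < \<delta>\<close> \<open>\<delta> \<le> 1 / 2\<close> by auto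
qed

lemma call_payoff_le_staircase:
  fixes x k e :: real and N :: nat
  assumes "0 \<le> e"
  shows "(if k < x then exp x - exp k else 0)
    \<le> (\<Sum>n<N. exp (k + n + 1) * indicator {k + n<..} x) + exp (- e * (k + N)) * exp ((1 + e) * x)"
    (is "_ \<le> ?cells + ?beyond")
proof -
  have "0 \<le> ?cells"
    by (intro sum_nonneg) auto
  have "0 \<le> ?beyond"
    by simp
  have payoff: "(if k < x then exp x - exp k else 0) \<le> exp x"
    by simp
  consider "x \<le> k" | "k + N \<le> x" | "k < x" "x < k + N"
    by linarith
  then show ?thesis
  proof cases
    case 1
    then show ?thesis
      using \<open>0 \<le> ?cells\<close> \<open>0 \<le> ?beyond\<close> by simp
  next
    case 2
    note payoff
    also have "exp x = exp (- e * x) * exp ((1 + e) * x)"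
      by (simp add: mult_exp_exp algebra_simps)
    also have "\<dots> \<le> ?beyond"
      using 2 \<open>0 \<le> e\<close> by (intro mult_right_mono) (simp_all add: mult_left_mono)
    finally show ?thesis
      using \<open>0 \<le> ?cells\<close> by linarith
  next
    case 3
    define n where "n = nat (\<lceil>x - k\<rceil> - 1)"
    have n: "k + n < x" "x \<le> k + n + 1" "n < N"
      using 3 unfolding n_def by linarith+
    note payoff
    also have "exp x \<le> exp (k + n + 1) * indicator {k + n<..} x"
      using n by simp
    also have "\<dots> \<le> ?cells"
      using \<open>n < N\<close> by (intro member_le_sum) auto
    finally show ?thesis
      using \<open>0 \<le> ?beyond\<close> by linarith
  qed
qed

context prob_space
begin

lemma tailX_eq_prob:
  fixes X :: "'a \<Rightarrow> real"
  assumes "X \<in> borel_measurable M"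
  shows "tailX M X x = prob {w \<in> space M. x < X w}"
proof -
  have "{w \<in> space M. x < X w} = space M - {w \<in> space M. X w \<le> x}"
    by auto
  moreover have "{w \<in> space M. X w \<le> x} \<in> events"
    using assms by measurable
  ultimately show ?thesis
    unfolding tailX_def cdfX_def by (simp add: prob_compl)
qed

lemma tailX_nonneg:
  fixes X :: "'a \<Rightarrow> real"
  assumes "X \<in> borel_measurable M"
  shows "0 \<le> tailX M X x"
  by (simp add: tailX_eq_prob[OF assms])

lemma tailX_antimono:
  fixes X :: "'a \<Rightarrow> real"
  assumes "X \<in> borel_measurable M" "x \<le> y"
  shows "tailX M X y \<le> tailX M X x"
  unfolding tailX_eq_prob[OF assms(1)]
  by (rule finite_measure_mono) (use assms in \<open>auto, measurable\<close>)

lemma integrable_indicator_greater: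
  fixes X :: "'a \<Rightarrow> real"
  assumes "X \<in> borel_measurable M"
  shows "integrable M (\<lambda>w. indicator {t<..} (X w) :: real)"
proof (rule integrable_const_bound[where B = 1])
  show "(\<lambda>w. indicator {t<..} (X w) :: real) \<in> borel_measurable M"
    using assms by (intro measurable_compose[OF _ borel_measurable_indicator]) auto
qed auto

lemma tailX_eq_expectation:
  fixes X :: "'a \<Rightarrow> real"
  assumes "X \<in> borel_measurable M"
  shows "tailX M X t = expectation (\<lambda>w. indicator {t<..} (X w))"
proof -
  have "expectation (\<lambda>w. indicator {t<..} (X w)) = expectation (indicator {w \<in> space M. t < X w})"
    by (rule Bochner_Integration.integral_cong) (auto simp: indicator_def)
  also have "\<dots> = prob {w \<in> space M. t < X w}"
    using assms by simp
  finally show ?thesis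
    using tailX_eq_prob[OF assms] by simp
qed

lemma tailX_le_exp_moment:
  fixes X :: "'a \<Rightarrow> real"
  assumes "X \<in> borel_measurable M" "0 \<le> t" "integrable M (\<lambda>w. exp (t * X w))"
  shows "tailX M X x \<le> expectation (\<lambda>w. exp (t * X w)) * exp (- t * x)"
proof -
  have "tailX M X x = expectation (\<lambda>w. indicator {x<..} (X w))"
    using tailX_eq_expectation[OF assms(1)] .
  also have "\<dots> \<le> expectation (\<lambda>w. exp (t * X w) * exp (- t * x))"
  proof (rule integral_mono)
    fix w
    have "exp (t * X w) * exp (- t * x) = exp (t * (X w - x))"
      by (simp add: mult_exp_exp algebra_simps)
    then show "indicator {x<..} (X w) \<le> exp (t * X w) * exp (- t * x)"
      using \<open>0 \<le> t\<close> by (simp add: indicator_def)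
  qed (use assms integrable_indicator_greater in auto)
  also have "\<dots> = expectation (\<lambda>w. exp (t * X w)) * exp (- t * x)"
    by simp
  finally show ?thesis .
qed

lemma integrable_exp_scaled_le:
  fixes X :: "'a \<Rightarrow> real"
  assumes "X \<in> borel_measurable M" "0 \<le> s" "s \<le> t" "integrable M (\<lambda>w. exp (t * X w))"
  shows "integrable M (\<lambda>w. exp (s * X w))"
proof (rule Bochner_Integration.integrable_bound)
  show "integrable M (\<lambda>w. 1 + exp (t * X w))"
    using assms(4) by simp
  show "AE w in M. norm (exp (s * X w)) \<le> norm (1 + exp (t * X w))"
  proof (rule AE_I2)
    fix w
    have "exp (s * X w) \<le> 1 + exp (t * X w)"
    proof (cases "X w \<le> 0")
      case True
      then have "s * X w \<le> 0"
        using \<open>0 \<le> s\<close> by (simp add: mult_nonneg_nonpos)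
      then have "exp (s * X w) \<le> 1"
        by simp
      then show ?thesis
        by (smt (verit) exp_gt_zero)
    next
      case False
      then have "exp (s * X w) \<le> exp (t * X w)"
        using \<open>s \<le> t\<close> by simp
      then show ?thesis
        by linarith
    qed
    then show "norm (exp (s * X w)) \<le> norm (1 + exp (t * X w))"
      by simp
  qed
qed (use assms(1) in measurable)

lemma integrable_call_payoff:
  fixes X :: "'a \<Rightarrow> real"
  assumes "X \<in> borel_measurable M" "integrable M (\<lambda>w. exp (X w))"
  shows "integrable M (\<lambda>w. if k < X w then exp (X w) - exp k else 0)"
proof (rule Bochner_Integration.integrable_bound[OF assms(2)])
  show "AE w in M. norm (if k < X w then exp (X w) - exp k else 0) \<le> norm (exp (X w))"
    by (rule AE_I2) simp
qed (use assms(1) in measurable)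

lemma callX_ge_tailX:
  fixes X :: "'a \<Rightarrow> real"
  assumes "X \<in> borel_measurable M" "integrable M (\<lambda>w. exp (X w))" "k \<le> y"
  shows "(exp y - exp k) * tailX M X y \<le> callX M X k"
proof -
  have "(exp y - exp k) * tailX M X y = expectation (\<lambda>w. (exp y - exp k) * indicator {y<..} (X w))"
    using tailX_eq_expectation[OF assms(1)] by simp
  also have "\<dots> \<le> callX M X k"
    unfolding callX_def
  proof (rule integral_mono)
    fix w
    show "(exp y - exp k) * indicator {y<..} (X w) \<le> (if k < X w then exp (X w) - exp k else 0)"
      using \<open>k \<le> y\<close> by (auto simp: indicator_def)
  qed (use assms integrable_indicator_greater integrable_call_payoff in auto)
  finally show ?thesis .
qed

lemma callX_antimono:
  fixes X :: "'a \<Rightarrow> real"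
  assumes "X \<in> borel_measurable M" "integrable M (\<lambda>w. exp (X w))" "k \<le> y"
  shows "callX M X y \<le> callX M X k"
  unfolding callX_def
  by (rule integral_mono) (use assms integrable_call_payoff in auto)

lemma callX_le_staircase:
  fixes X :: "'a \<Rightarrow> real" and e k :: real and N :: nat
  assumes "X \<in> borel_measurable M" "0 \<le> e" and int: "integrable M (\<lambda>w. exp ((1 + e) * X w))"
  shows "callX M X k \<le> (\<Sum>n<N. exp (k + n + 1) * tailX M X (k + n))
    + exp (- e * (k + N)) * expectation (\<lambda>w. exp ((1 + e) * X w))"
proof -
  have "integrable M (\<lambda>w. exp (X w))"
    using integrable_exp_scaled_le[OF assms(1) _ _ int, of 1] \<open>0 \<le> e\<close> by simp
  have staircase: "integrable M (\<lambda>w. (\<Sum>n<N. exp (k + n + 1) * indicator {k + n<..} (X w))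
      + exp (- e * (k + N)) * exp ((1 + e) * X w))"
    using int integrable_indicator_greater[OF assms(1)]
    by (intro Bochner_Integration.integrable_add Bochner_Integration.integrable_sum integrable_mult_right) auto
  have "callX M X k \<le> expectation (\<lambda>w. (\<Sum>n<N. exp (k + n + 1) * indicator {k + n<..} (X w))
      + exp (- e * (k + N)) * exp ((1 + e) * X w))"
    unfolding callX_def
    by (rule integral_mono)
      (use staircase integrable_call_payoff[OF assms(1) \<open>integrable M (\<lambda>w. exp (X w))\<close>]
        call_payoff_le_staircase[OF \<open>0 \<le> e\<close>] in auto)
  also have "\<dots> = (\<Sum>n<N. exp (k + n + 1) * tailX M X (k + n))
      + exp (- e * (k + N)) * expectation (\<lambda>w. exp ((1 + e) * X w))"
    using int integrable_indicator_greater[OF assms(1)]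
    by (subst Bochner_Integration.integral_add)
      (auto simp: Bochner_Integration.integral_sum tailX_eq_expectation[OF assms(1)]
        simp del: sum_mult_indicator)
  finally show ?thesis .
qed

end

locale call_asymptotics = prob_space M for M :: "'a measure" +
  fixes X :: "'a \<Rightarrow> real" and \<epsilon> \<alpha> :: real
  assumes X_measurable: "X \<in> borel_measurable M"
    and eps_pos: "0 < \<epsilon>"
    and integrable_exp_moment: "integrable M (\<lambda>w. exp ((1 + \<epsilon>) * X w))"
    and regvar_log_tail: "regvar (\<lambda>x. - ln (tailX M X x)) \<alpha>"
    and index_ge_one: "1 \<le> \<alpha>"
begin

abbreviation log_tail :: "real \<Rightarrow> real" where
  "log_tail x \<equiv> - ln (tailX M X x)"

abbreviation log_call :: "real \<Rightarrow> real" where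
  "log_call k \<equiv> - ln (callX M X k)"

(* Since ln 0 = 0 in HOL, log_tail y > 0 forces tailX M X y \<noteq> 0. *)
lemma tailX_pos: "0 < tailX M X x"
proof -
  obtain x0 where x0: "\<And>y. x0 \<le> y \<Longrightarrow> 0 < log_tail y"
    using regvar_log_tail unfolding regvar_def eventually_at_top_linorder by blast
  define y where "y = max x x0"
  have "tailX M X y \<noteq> 0"
    using x0[of y] unfolding y_def by auto
  then have "0 < tailX M X y"
    using tailX_nonneg[OF X_measurable] by (simp add: order_less_le)
  also have "tailX M X y \<le> tailX M X x"
    unfolding y_def by (rule tailX_antimono[OF X_measurable]) simp
  finally show ?thesis .
qed

lemma mono_log_tail: "mono log_tail"
  by (rule monoI) (simp add: tailX_pos tailX_antimono[OF X_measurable])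

lemma integrable_exp: "integrable M (\<lambda>w. exp (X w))"
  using integrable_exp_scaled_le[OF X_measurable _ _ integrable_exp_moment, of 1] eps_pos by simp

lemma callX_pos: "0 < callX M X k"
proof -
  have "0 < (exp (k + 1) - exp k) * tailX M X (k + 1)"
    using tailX_pos by simp
  also have "\<dots> \<le> callX M X k"
    by (rule callX_ge_tailX[OF X_measurable integrable_exp]) simp
  finally show ?thesis .
qed

lemma mono_log_call: "mono log_call"
  by (rule monoI) (simp add: callX_pos callX_antimono[OF X_measurable integrable_exp])

lemma log_tail_linear_lower: "\<forall>\<^sub>F x in at_top. (1 + \<epsilon> / 2) * x \<le> log_tail x"
proof -
  define m where "m = expectation (\<lambda>w. exp ((1 + \<epsilon>) * X w))"
  have tail: "tailX M X x \<le> m * exp (- (1 + \<epsilon>) * x)" for x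
    unfolding m_def using tailX_le_exp_moment[OF X_measurable _ integrable_exp_moment] eps_pos by simp
  have "0 < m"
    using tail[of 0] tailX_pos[of 0] by simp
  have chernoff: "(1 + \<epsilon>) * x - ln m \<le> log_tail x" for x
  proof -
    have "ln (tailX M X x) \<le> ln (m * exp (- (1 + \<epsilon>) * x))"
      using tail[of x] tailX_pos[of x] \<open>0 < m\<close> by simp
    also have "\<dots> = ln m - (1 + \<epsilon>) * x"
      using \<open>0 < m\<close> by (simp add: ln_mult algebra_simps)
    finally show ?thesis
      by simp
  qed
  show ?thesis
    using eventually_ge_at_top[of "2 * ln m / \<epsilon>"]
  proof eventually_elim
    case (elim x)
    then have "(1 + \<epsilon> / 2) * x \<le> (1 + \<epsilon>) * x - ln m"
      using eps_pos by (simp add: field_simps)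
    with chernoff[of x] show ?case
      by linarith
  qed
qed

lemma log_call_le_dilated:
  assumes "1 < l"
  shows "\<forall>\<^sub>F k in at_top. log_call k \<le> log_tail (l * k) - k"
  using eventually_ge_at_top[of "ln 2 / (l - 1)"] eventually_gt_at_top[of 0]
proof eventually_elim
  case (elim k)
  then have "ln 2 \<le> (l - 1) * k"
    using assms by (simp add: field_simps)
  then have "2 \<le> exp ((l - 1) * k)"
    by (metis exp_le_cancel_iff exp_ln zero_less_numeral)
  then have "2 * exp k \<le> exp ((l - 1) * k) * exp k"
    by (intro mult_right_mono) auto
  then have "exp k \<le> exp (l * k) - exp k"
    by (simp add: mult_exp_exp algebra_simps)
  then have "exp k * tailX M X (l * k) \<le> (exp (l * k) - exp k) * tailX M X (l * k)"
    using tailX_pos by (intro mult_right_mono) (auto simp: less_imp_le)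
  also have "\<dots> \<le> callX M X k"
    using assms elim by (intro callX_ge_tailX[OF X_measurable integrable_exp]) simp
  finally have "exp (k - log_tail (l * k)) \<le> callX M X k"
    using tailX_pos by (simp add: exp_add)
  then show ?case
    using callX_pos by (simp add: ln_le_cancel_iff[symmetric])
qed

lemma callX_le_geometric:
  assumes "0 < e"
    and gap: "\<forall>x\<ge>k. (1 - \<delta>) * (log_tail k - k) + e * (x - k) \<le> log_tail x - x"
  shows "callX M X k \<le> exp 1 / (1 - exp (- e)) * exp (- ((1 - \<delta>) * (log_tail k - k)))"
    (is "_ \<le> ?B * ?A")
proof -
  define q where "q = exp (- e)"
  have "0 < q" "q < 1"
    using \<open>0 < e\<close> unfolding q_def by auto
  have cell: "exp (k + n + 1) * tailX M X (k + n) \<le> exp 1 * ?A * q ^ n" for n :: nat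
  proof -
    have "exp (k + n + 1) * tailX M X (k + n) = exp (1 - (log_tail (k + n) - (k + n)))"
      using tailX_pos[of "k + n"] by (simp add: exp_add exp_diff exp_minus divide_inverse)
    also have "\<dots> \<le> exp (1 - ((1 - \<delta>) * (log_tail k - k) + e * n))"
      using gap[rule_format, of "k + n"] by simp
    also have "\<dots> = exp 1 * ?A * q ^ n"
      unfolding q_def by (simp add: exp_of_nat_mult[symmetric] mult_exp_exp algebra_simps)
    finally show ?thesis .
  qed
  have cells: "(\<Sum>n<N. exp (k + n + 1) * tailX M X (k + n)) \<le> ?B * ?A" for N :: nat
  proof -
    have "(\<Sum>n<N. exp (k + n + 1) * tailX M X (k + n)) \<le> (\<Sum>n<N. exp 1 * ?A * q ^ n)"
      by (intro sum_mono cell)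
    also have "\<dots> = exp 1 * ?A * ((1 - q ^ N) / (1 - q))"
      using \<open>q < 1\<close> by (simp add: sum_distrib_left[symmetric] sum_gp_strict)
    also have "\<dots> \<le> exp 1 * ?A * (1 / (1 - q))"
      using \<open>0 < q\<close> \<open>q < 1\<close> by (intro mult_left_mono divide_right_mono) auto
    finally show ?thesis
      unfolding q_def by simp
  qed
  define m where "m = expectation (\<lambda>w. exp ((1 + \<epsilon>) * X w))"
  have "callX M X k \<le> ?B * ?A + exp (- \<epsilon> * k) * exp (- \<epsilon>) ^ N * m" for N :: nat
  proof -
    have "exp (- \<epsilon> * (k + N)) = exp (- \<epsilon> * k) * exp (- \<epsilon>) ^ N"
      by (simp add: exp_of_nat_mult[symmetric] mult_exp_exp algebra_simps)
    then show ?thesis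
      using callX_le_staircase[OF X_measurable _ integrable_exp_moment, of k N] eps_pos cells[of N]
      unfolding m_def by simp
  qed
  moreover have "(\<lambda>N. ?B * ?A + exp (- \<epsilon> * k) * exp (- \<epsilon>) ^ N * m)
      \<longlonglongrightarrow> ?B * ?A + exp (- \<epsilon> * k) * 0 * m"
    using eps_pos by (intro tendsto_intros LIMSEQ_power_zero) simp
  ultimately show ?thesis
    by (intro LIMSEQ_le_const) auto
qed

lemma log_call_ge_excess:
  assumes "0 < \<delta>" "\<delta> \<le> 1 / 2"
  shows "\<exists>C. \<forall>\<^sub>F k in at_top. (1 - \<delta>) * (log_tail k - k) - C \<le> log_call k"
proof -
  obtain e where "0 < e"
    and gap: "\<forall>\<^sub>F k in at_top. \<forall>x\<ge>k. (1 - \<delta>) * (log_tail k - k) + e * (x - k) \<le> log_tail x - x"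
    using excess_grows_linearly[OF mono_log_tail regvar_log_tail index_ge_one _ log_tail_linear_lower assms]
      eps_pos by auto
  define B where "B = exp 1 / (1 - exp (- e))"
  have "0 < B"
    using \<open>0 < e\<close> unfolding B_def by simp
  have "\<forall>\<^sub>F k in at_top. (1 - \<delta>) * (log_tail k - k) - ln B \<le> log_call k"
    using gap
  proof eventually_elim
    case (elim k)
    have "callX M X k \<le> B * exp (- ((1 - \<delta>) * (log_tail k - k)))"
      using callX_le_geometric[OF \<open>0 < e\<close> elim] unfolding B_def .
    then have "ln (callX M X k) \<le> ln (B * exp (- ((1 - \<delta>) * (log_tail k - k))))"
      using callX_pos \<open>0 < B\<close> by simp
    then show ?case
      using \<open>0 < B\<close> by (simp add: ln_mult)
  qed
  then show ?thesis
    by blast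
qed

lemma excess_at_top: "filterlim (\<lambda>k. log_tail k - k) at_top at_top"
proof (rule filterlim_at_top_mono)
  show "filterlim (\<lambda>k. \<epsilon> / 2 * k) at_top at_top"
    using eps_pos by (intro filterlim_tendsto_pos_mult_at_top[OF tendsto_const _ filterlim_ident]) simp
  show "\<forall>\<^sub>F k in at_top. \<epsilon> / 2 * k \<le> log_tail k - k"
    using log_tail_linear_lower by eventually_elim (simp add: algebra_simps)
qed

lemma eventually_log_call_ratio_gt:
  assumes "b < 1"
  shows "\<forall>\<^sub>F k in at_top. b < log_call k / (log_tail k - k)"
proof -
  define \<delta> where "\<delta> = min (1 / 2) ((1 - b) / 2)"
  have "0 < \<delta>" "\<delta> \<le> 1 / 2" "b < 1 - \<delta>"
    using assms unfolding \<delta>_def by (auto simp: min_def field_simps)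
  then obtain C where C: "\<forall>\<^sub>F k in at_top. (1 - \<delta>) * (log_tail k - k) - C \<le> log_call k"
    using log_call_ge_excess by blast
  have "((\<lambda>k. (1 - \<delta>) - C / (log_tail k - k)) \<longlongrightarrow> (1 - \<delta>) - 0) at_top"
    using excess_at_top
    by (intro tendsto_diff tendsto_const tendsto_divide_0[OF tendsto_const] filterlim_at_top_imp_at_infinity)
  then have "\<forall>\<^sub>F k in at_top. b < (1 - \<delta>) - C / (log_tail k - k)"
    using \<open>b < 1 - \<delta>\<close> by (simp add: order_tendsto_iff)
  moreover have "\<forall>\<^sub>F k in at_top. 0 < log_tail k - k"
    using excess_at_top unfolding filterlim_at_top_dense by blast
  ultimately show ?thesis
    using C
  proof eventually_elim
    case (elim k)
    then have "(1 - \<delta>) - C / (log_tail k - k) = ((1 - \<delta>) * (log_tail k - k) - C) / (log_tail k - k)"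
      by (simp add: field_simps)
    also have "\<dots> \<le> log_call k / (log_tail k - k)"
      using elim by (intro divide_right_mono) auto
    finally show ?case
      using elim(1) by linarith
  qed
qed

lemma log_tail_le_excess:
  "\<forall>\<^sub>F k in at_top. 0 < log_tail k - k \<and> log_tail k \<le> (1 + 2 / \<epsilon>) * (log_tail k - k)"
  using log_tail_linear_lower eventually_gt_at_top[of 0]
proof eventually_elim
  case (elim k)
  then have lin: "\<epsilon> / 2 * k \<le> log_tail k - k"
    by (simp add: algebra_simps)
  moreover have "0 < \<epsilon> / 2 * k"
    using eps_pos elim(2) by simp
  ultimately have "0 < log_tail k - k"
    by linarith
  have "log_tail k = (log_tail k - k) + 2 / \<epsilon> * (\<epsilon> / 2 * k)"
    using eps_pos by simp
  also have "\<dots> \<le> (log_tail k - k) + 2 / \<epsilon> * (log_tail k - k)"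
    using lin eps_pos by (intro add_left_mono mult_left_mono) auto
  also have "\<dots> = (1 + 2 / \<epsilon>) * (log_tail k - k)"
    by (simp add: algebra_simps)
  finally show ?case
    using \<open>0 < log_tail k - k\<close> by blast
qed

lemma eventually_log_call_ratio_lt:
  assumes "1 < b"
  shows "\<forall>\<^sub>F k in at_top. log_call k / (log_tail k - k) < b"
proof -
  define \<kappa> where "\<kappa> = 1 + 2 / \<epsilon>"
  define c where "c = 1 + (b - 1) / (2 * \<kappa>)"
  define l where "l = c powr (1 / (2 * \<alpha>))"
  have "0 < \<kappa>"
    using eps_pos unfolding \<kappa>_def by (simp add: add_pos_nonneg)
  then have "1 < c" "(c - 1) * \<kappa> = (b - 1) / 2"
    using assms unfolding c_def by simp_all
  then have "1 < l"
    using index_ge_one unfolding l_def by simp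
  have "l powr \<alpha> = c powr (1 / 2)"
    using index_ge_one unfolding l_def by (simp add: powr_powr)
  also have "\<dots> < c powr 1"
    using \<open>1 < c\<close> by (intro powr_less_mono) auto
  finally have ratio: "\<forall>\<^sub>F k in at_top. log_tail (l * k) \<le> c * log_tail k"
    using regvar_eventually_ratio_le[OF regvar_log_tail] \<open>1 < l\<close> \<open>1 < c\<close> by simp
  show ?thesis
    using log_call_le_dilated[OF \<open>1 < l\<close>] log_tail_le_excess ratio
    unfolding \<kappa>_def[symmetric]
  proof eventually_elim
    case (elim k)
    then have "log_call k \<le> (log_tail k - k) + (c - 1) * log_tail k"
      by (simp add: algebra_simps)
    also have "\<dots> \<le> (log_tail k - k) + (c - 1) * (\<kappa> * (log_tail k - k))"
      using elim(2) \<open>1 < c\<close> by (intro add_left_mono mult_left_mono) auto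
    also have "\<dots> = (log_tail k - k) + ((c - 1) * \<kappa>) * (log_tail k - k)"
      by (simp only: mult.assoc)
    also have "\<dots> = (1 + (b - 1) / 2) * (log_tail k - k)"
      unfolding \<open>(c - 1) * \<kappa> = (b - 1) / 2\<close> by (simp add: algebra_simps)
    also have "\<dots> < b * (log_tail k - k)"
      using assms elim(2) by (intro mult_strict_right_mono) (auto simp: field_simps)
    finally show ?case
      using elim(2) by (subst pos_divide_less_eq) auto
  qed
qed

lemma asym_eq_log_call: "asym_eq log_call (\<lambda>k. log_tail k - k)"
  unfolding asym_eq_def order_tendsto_iff
  using eventually_log_call_ratio_gt eventually_log_call_ratio_lt by blast

end

theorem lemma2:
  fixes M :: "'a measure" and X :: "'a \<Rightarrow> real" and \<alpha> :: real
  assumes "prob_space M"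
    and "X \<in> borel_measurable M"
    and "\<exists>\<epsilon>>0. integrable M (\<lambda>w. exp ((1 + \<epsilon>) * X w))"
    and "regvar (\<lambda>x. - ln (tailX M X x)) \<alpha>"
    and "\<alpha> \<ge> 1"
  shows "regvar (\<lambda>k. - ln (callX M X k)) \<alpha> \<and>
         asym_eq (\<lambda>k. - ln (callX M X k)) (\<lambda>k. - k - ln (tailX M X k))"
proof -
  obtain \<epsilon> where "0 < \<epsilon>" "integrable M (\<lambda>w. exp ((1 + \<epsilon>) * X w))"
    using assms(3) by blast
  with assms interpret call_asymptotics M X \<epsilon> \<alpha>
    by (simp add: call_asymptotics_def call_asymptotics_axioms_def)
  have excess: "(\<lambda>k. - k - ln (tailX M X k)) = (\<lambda>k. log_tail k - k)"
    by (simp add: fun_eq_iff)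
  have "regvar (\<lambda>k. log_tail k - k) \<alpha>"
    using regvar_minus_identity[OF regvar_log_tail index_ge_one _ log_tail_linear_lower] eps_pos
    by simp
  moreover have "log_call \<in> borel_measurable borel"
    by (rule borel_measurable_mono[OF mono_log_call])
  ultimately show ?thesis
    unfolding excess using asym_eq_log_call regvar_asym_eq by blast
qed

end
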